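(* Let $A$ and $B$ be differential rings and $\nu\colon A\to B$ a differential homomorphism. Suppose $B$ is differentially generated over $\nu(A)$ by finitely many elements $\eta_1,\ldots,\eta_m$, and that for each generator $\eta_j$ there exist $b_1,\ldots,b_n\in A$ (depending on $j$) such that $\nu(b_k)\eta_j\in\nu(A)$ for all $k$ and $\{b_1,\ldots,b_n\}=A$. Then the contraction map $\nu^*\colon\operatorname{Spec}^\Delta B\to V(\ker\nu)$, $\mathfrak q\mapsto \nu^{-1}(\mathfrak q)$, is a homeomorphism, where $V(\ker\nu)\subseteq\operatorname{Spec}^\Delta A$ carries the subspace topology.
   Context: All rings are commutative with unit; homomorphisms preserve the unit. A differential ring is a ring equipped with finitely many pairwise commuting derivations; a differential homomorphism is a ring homomorphism commuting with the derivations. $B$ is differentially generated over $\nu(A)$ by $\eta_1,\dots,\eta_m$ if $B$ is the smallest differential subring of $B$ containing $\nu(A)$ and $\eta_1,\dots,\eta_m$. For a differential ring $A$, $\operatorname{Spec}^\Delta A$ is the set of prime ideals of $A$ closed under all the derivations (prime differential ideals); for $E\subseteq A$, $V(E)$ is the set of prime differential ideals containing $E$, and the sets $V(E)$ are the closed sets of the Kolchin topology on $\operatorname{Spec}^\Delta A$. For $E\subseteq A$, $\{E\}$ denotes the smallest radical differential ideal of $A$ containing $E$. *)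

theory Defs
  imports "HOL-Analysis.Abstract_Topology"
begin

definition derivation :: "('a::comm_ring_1 \<Rightarrow> 'a) \<Rightarrow> bool" where
  "derivation d \<longleftrightarrow> (\<forall>x y. d (x + y) = d x + d y) \<and> (\<forall>x y. d (x * y) = x * d y + d x * y)"

definition diff_ring :: "('i::finite \<Rightarrow> 'a::comm_ring_1 \<Rightarrow> 'a) \<Rightarrow> bool" where
  "diff_ring D \<longleftrightarrow> (\<forall>i. derivation (D i)) \<and> (\<forall>i j x. D i (D j x) = D j (D i x))"

definition ring_hom_fun :: "('a::comm_ring_1 \<Rightarrow> 'b::comm_ring_1) \<Rightarrow> bool" where
  "ring_hom_fun f \<longleftrightarrow> f 1 = 1 \<and> (\<forall>x y. f (x + y) = f x + f y) \<and> (\<forall>x y. f (x * y) = f x * f y)"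

definition diff_hom :: "('i \<Rightarrow> 'a::comm_ring_1 \<Rightarrow> 'a) \<Rightarrow> ('i \<Rightarrow> 'b::comm_ring_1 \<Rightarrow> 'b) \<Rightarrow> ('a \<Rightarrow> 'b) \<Rightarrow> bool" where
  "diff_hom DA DB f \<longleftrightarrow> ring_hom_fun f \<and> (\<forall>i x. f (DA i x) = DB i (f x))"

definition is_ideal :: "'a::comm_ring_1 set \<Rightarrow> bool" where
  "is_ideal I \<longleftrightarrow> 0 \<in> I \<and> (\<forall>x\<in>I. \<forall>y\<in>I. x + y \<in> I) \<and> (\<forall>x\<in>I. - x \<in> I) \<and> (\<forall>r. \<forall>x\<in>I. r * x \<in> I)"

definition is_prime_ideal :: "'a::comm_ring_1 set \<Rightarrow> bool" where
  "is_prime_ideal P \<longleftrightarrow> is_ideal P \<and> P \<noteq> UNIV \<and> (\<forall>x y. x * y \<in> P \<longrightarrow> x \<in> P \<or> y \<in> P)"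

definition diff_closed :: "('i \<Rightarrow> 'a \<Rightarrow> 'a) \<Rightarrow> 'a set \<Rightarrow> bool" where
  "diff_closed D S \<longleftrightarrow> (\<forall>i. \<forall>x\<in>S. D i x \<in> S)"

definition is_radical :: "'a::comm_ring_1 set \<Rightarrow> bool" where
  "is_radical I \<longleftrightarrow> (\<forall>x n. x ^ n \<in> I \<longrightarrow> x \<in> I)"

definition diff_spec :: "('i \<Rightarrow> 'a::comm_ring_1 \<Rightarrow> 'a) \<Rightarrow> 'a set set" where
  "diff_spec D = {P. is_prime_ideal P \<and> diff_closed D P}"

definition diff_V :: "('i \<Rightarrow> 'a::comm_ring_1 \<Rightarrow> 'a) \<Rightarrow> 'a set \<Rightarrow> 'a set set" where
  "diff_V D E = {P \<in> diff_spec D. E \<subseteq> P}"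

definition kolchin_topology :: "('i \<Rightarrow> 'a::comm_ring_1 \<Rightarrow> 'a) \<Rightarrow> 'a set topology" where
  "kolchin_topology D = topology (\<lambda>U. \<exists>E. U = diff_spec D - diff_V D E)"

text \<open>{E}: the smallest radical differential ideal containing E.\<close>
definition rad_diff_ideal_gen :: "('i \<Rightarrow> 'a::comm_ring_1 \<Rightarrow> 'a) \<Rightarrow> 'a set \<Rightarrow> 'a set" where
  "rad_diff_ideal_gen D E = \<Inter>{I. is_ideal I \<and> diff_closed D I \<and> is_radical I \<and> E \<subseteq> I}"

definition diff_subring :: "('i \<Rightarrow> 'a::comm_ring_1 \<Rightarrow> 'a) \<Rightarrow> 'a set \<Rightarrow> bool" where
  "diff_subring D S \<longleftrightarrow> 1 \<in> S \<and> (\<forall>x\<in>S. \<forall>y\<in>S. x + y \<in> S \<and> x * y \<in> S) \<and> (\<forall>x\<in>S. - x \<in> S)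
      \<and> diff_closed D S"

definition diff_subring_gen :: "('i \<Rightarrow> 'a::comm_ring_1 \<Rightarrow> 'a) \<Rightarrow> 'a set \<Rightarrow> 'a set" where
  "diff_subring_gen D X = \<Inter>{S. diff_subring D S \<and> X \<subseteq> S}"

end

theory Submission imports Defs begin

(* For a prime differential ideal p of A call x \<in> B a p-fraction if
   \<nu>(c) x \<in> \<nu>(A) for some c \<notin> p.  The p-fractions form a differential subring of B
   (quotient rule), and the hypothesis on the generators \<eta>_j puts every \<eta>_j into it:
   since {b_1,...,b_n} = A, not all b_k lie in the radical differential ideal p.  Hence
   every element of B is a p-fraction, i.e. B embeds into the localisation of \<nu>(A) at p.
   In that situation the contraction q \<mapsto> \<nu>\<inverse>(q) has an explicit inverse, the extension
   p \<mapsto> {x. \<nu>(c) x = \<nu>(a) for some c \<notin> p, a \<in> p}, and both maps pull Kolchin-closed sets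
   back to Kolchin-closed sets, so the contraction is a homeomorphism onto V(ker \<nu>). *)

lemma ideal_zero: "is_ideal I \<Longrightarrow> 0 \<in> I" by (simp add: is_ideal_def)
lemma ideal_add: "is_ideal I \<Longrightarrow> x \<in> I \<Longrightarrow> y \<in> I \<Longrightarrow> x + y \<in> I" by (simp add: is_ideal_def)
lemma ideal_neg: "is_ideal I \<Longrightarrow> x \<in> I \<Longrightarrow> - x \<in> I" by (simp add: is_ideal_def)
lemma ideal_lmul: "is_ideal I \<Longrightarrow> x \<in> I \<Longrightarrow> r * x \<in> I" by (simp add: is_ideal_def)
lemma ideal_rmul: "is_ideal I \<Longrightarrow> x \<in> I \<Longrightarrow> x * r \<in> I" by (metis ideal_lmul mult.commute)
lemma ideal_diff: "is_ideal I \<Longrightarrow> x \<in> I \<Longrightarrow> y \<in> I \<Longrightarrow> x - y \<in> I"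
  by (metis ideal_add ideal_neg diff_conv_add_uminus)

lemma prime_ideal_is_ideal: "is_prime_ideal P \<Longrightarrow> is_ideal P"
  by (simp add: is_prime_ideal_def)

lemma prime_ideal_one: "is_prime_ideal P \<Longrightarrow> 1 \<notin> P"
  unfolding is_prime_ideal_def by (metis UNIV_eq_I ideal_lmul mult.right_neutral)

lemma prime_ideal_mul: "is_prime_ideal P \<Longrightarrow> x * y \<in> P \<Longrightarrow> x \<in> P \<or> y \<in> P"
  by (simp add: is_prime_ideal_def)

lemma prime_ideal_nmul: "is_prime_ideal P \<Longrightarrow> x \<notin> P \<Longrightarrow> y \<notin> P \<Longrightarrow> x * y \<notin> P"
  using prime_ideal_mul by blast

lemma prime_ideal_radical: "is_prime_ideal P \<Longrightarrow> is_radical P"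
  unfolding is_radical_def
proof (intro allI impI)
  fix x n assume P: "is_prime_ideal P" and "x ^ n \<in> P"
  then show "x \<in> P"
    by (induction n) (auto dest: prime_ideal_mul simp: prime_ideal_one)
qed

lemma diff_spec_prime: "p \<in> diff_spec D \<Longrightarrow> is_prime_ideal p"
  by (simp add: diff_spec_def)

lemma diff_spec_ideal: "p \<in> diff_spec D \<Longrightarrow> is_ideal p"
  by (simp add: diff_spec_def is_prime_ideal_def)

lemma diff_spec_closed: "p \<in> diff_spec D \<Longrightarrow> diff_closed D p"
  by (simp add: diff_spec_def)

text \<open>A prime differential ideal contains {E} as soon as it contains E; so if {E} is
  the whole ring, no prime differential ideal contains E.\<close>
lemma diff_spec_not_contains_unit_generators:
  assumes "p \<in> diff_spec D" and "rad_diff_ideal_gen D E = UNIV"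
  shows "\<not> E \<subseteq> p"
proof
  assume "E \<subseteq> p"
  then have "rad_diff_ideal_gen D E \<subseteq> p"
    unfolding rad_diff_ideal_gen_def
    using assms(1) diff_spec_ideal diff_spec_closed diff_spec_prime prime_ideal_radical
    by (intro Inter_lower) blast
  then show False
    using assms prime_ideal_one[OF diff_spec_prime] by blast
qed

section \<open>The Kolchin topology\<close>

text \<open>The complements of the sets V(E) are closed under finite intersections
  (V(E1) \<union> V(E2) = V(E1 E2)) and arbitrary unions, so they form a topology.\<close>
lemma kolchin_istopology: "istopology (\<lambda>U. \<exists>E. U = diff_spec D - diff_V D E)"
  unfolding istopology_def
proof (intro conjI allI impI)
  fix S T assume "\<exists>E. S = diff_spec D - diff_V D E" "\<exists>E. T = diff_spec D - diff_V D E"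
  then obtain E1 E2 where e: "S = diff_spec D - diff_V D E1" "T = diff_spec D - diff_V D E2"
    by blast
  have "S \<inter> T = diff_spec D - diff_V D {x * y | x y. x \<in> E1 \<and> y \<in> E2}"
  proof safe
    fix P assume "P \<in> S" "P \<in> T" "P \<in> diff_V D {x * y | x y. x \<in> E1 \<and> y \<in> E2}"
    then obtain x y where "x \<in> E1" "x \<notin> P" "y \<in> E2" "y \<notin> P" "P \<in> diff_spec D"
      using e by (auto simp: diff_V_def)
    moreover then have "x * y \<notin> P" using prime_ideal_nmul diff_spec_prime by blast
    ultimately show False using \<open>P \<in> diff_V D _\<close> by (auto simp: diff_V_def)
  next
    fix P assume "P \<in> diff_spec D" "P \<notin> diff_V D {x * y | x y. x \<in> E1 \<and> y \<in> E2}"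
    then have "\<not> E1 \<subseteq> P" "\<not> E2 \<subseteq> P"
      by (auto simp: diff_V_def dest!: diff_spec_ideal intro: ideal_lmul ideal_rmul)
    then show "P \<in> S" "P \<in> T" using e \<open>P \<in> diff_spec D\<close> by (auto simp: diff_V_def)
  qed (use e in auto)
  then show "\<exists>E. S \<inter> T = diff_spec D - diff_V D E" by blast
next
  fix K assume "\<forall>K\<in>K. \<exists>E. K = diff_spec D - diff_V D E"
  then obtain F where F: "\<forall>U\<in>K. U = diff_spec D - diff_V D (F U)" by metis
  have "\<Union>K = diff_spec D - diff_V D (\<Union>(F ` K))"
    using F by (auto simp: diff_V_def)
  then show "\<exists>E. \<Union>K = diff_spec D - diff_V D E" by blast
qed

lemma kolchin_open: "openin (kolchin_topology D) U \<longleftrightarrow> (\<exists>E. U = diff_spec D - diff_V D E)"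
  unfolding kolchin_topology_def using topology_inverse'[OF kolchin_istopology[of D]] by simp

lemma kolchin_topspace: "topspace (kolchin_topology D) = diff_spec D"
proof -
  have "diff_V D UNIV = {}"
    by (auto simp: diff_V_def diff_spec_def is_prime_ideal_def)
  then have "openin (kolchin_topology D) (diff_spec D)" by (metis Diff_empty kolchin_open)
  then show ?thesis unfolding topspace_def using kolchin_open by blast
qed

lemma kolchin_closed: "closedin (kolchin_topology D) C \<longleftrightarrow> (\<exists>E. C = diff_V D E)"
  unfolding closedin_def kolchin_topspace kolchin_open
  by (auto simp: diff_V_def)

lemma kolchin_subtopology_closed:
  "closedin (subtopology (kolchin_topology D) S) C \<longleftrightarrow> (\<exists>E. C = diff_V D E \<inter> S)"
  unfolding closedin_subtopology kolchin_closed by blast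

lemma topspace_diff_V:
  "topspace (subtopology (kolchin_topology D) (diff_V D E)) = diff_V D E"
  by (auto simp: kolchin_topspace diff_V_def)

section \<open>Differential homomorphisms\<close>

locale diff_ring_hom =
  fixes DA :: "'i \<Rightarrow> 'a::comm_ring_1 \<Rightarrow> 'a"
    and DB :: "'i \<Rightarrow> 'b::comm_ring_1 \<Rightarrow> 'b"
    and \<nu> :: "'a \<Rightarrow> 'b"
  assumes hom: "diff_hom DA DB \<nu>"
    and derivation_B: "\<And>i. derivation (DB i)"
begin

lemma hom_add: "\<nu> (x + y) = \<nu> x + \<nu> y"
  using hom by (simp add: diff_hom_def ring_hom_fun_def)
lemma hom_mul: "\<nu> (x * y) = \<nu> x * \<nu> y"
  using hom by (simp add: diff_hom_def ring_hom_fun_def)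
lemma hom_one: "\<nu> 1 = 1"
  using hom by (simp add: diff_hom_def ring_hom_fun_def)
lemma hom_deriv: "\<nu> (DA i x) = DB i (\<nu> x)"
  using hom by (simp add: diff_hom_def)
lemma hom_zero: "\<nu> 0 = 0"
  using hom_add[of 0 0] by simp
lemma hom_neg: "\<nu> (- x) = - \<nu> x"
proof -
  have "\<nu> x + \<nu> (- x) = 0" using hom_add[of x "- x"] hom_zero by simp
  then show ?thesis by (metis add_diff_cancel_left' diff_0)
qed
lemma hom_diff: "\<nu> (x - y) = \<nu> x - \<nu> y"
  using hom_add[of x "- y"] by (simp add: hom_neg)

lemma deriv_B_mul: "DB i (x * y) = x * DB i y + DB i x * y"
  using derivation_B by (simp add: derivation_def)

lemma contraction_in_V_kernel:
  assumes q: "q \<in> diff_spec DB"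
  shows "\<nu> -` q \<in> diff_V DA (\<nu> -` {0})"
proof -
  have I: "is_ideal q" and P: "is_prime_ideal q"
    using q diff_spec_ideal diff_spec_prime by blast+
  have one: "1 \<notin> \<nu> -` q"
    using prime_ideal_one[OF P] by (simp add: hom_one)
  have "is_ideal (\<nu> -` q)"
    using I unfolding is_ideal_def by (simp add: hom_zero hom_add hom_neg hom_mul)
  moreover have "\<nu> -` q \<noteq> UNIV" using one by blast
  moreover have "x * y \<in> \<nu> -` q \<Longrightarrow> x \<in> \<nu> -` q \<or> y \<in> \<nu> -` q" for x y
    using prime_ideal_mul[OF P] by (simp add: hom_mul)
  moreover have "diff_closed DA (\<nu> -` q)"
    using diff_spec_closed[OF q] by (simp add: diff_closed_def hom_deriv)
  moreover have "\<nu> -` {0} \<subseteq> \<nu> -` q"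
    using ideal_zero[OF I] by auto
  ultimately show ?thesis
    by (simp add: diff_V_def diff_spec_def is_prime_ideal_def)
qed

lemma contraction_preimage_V:
  "{q \<in> diff_spec DB. \<nu> -` q \<in> diff_V DA E \<inter> diff_V DA (\<nu> -` {0})} = diff_V DB (\<nu> ` E)"
  using contraction_in_V_kernel by (auto simp: diff_V_def)

lemma contraction_continuous:
  "continuous_map (kolchin_topology DB)
     (subtopology (kolchin_topology DA) (diff_V DA (\<nu> -` {0}))) (\<lambda>q. \<nu> -` q)"
  unfolding continuous_map_closedin topspace_diff_V kolchin_topspace
proof (intro conjI allI impI)
  show "(\<lambda>q. \<nu> -` q) \<in> diff_spec DB \<rightarrow> diff_V DA (\<nu> -` {0})"
    using contraction_in_V_kernel by blast
next
  fix C assume "closedin (subtopology (kolchin_topology DA) (diff_V DA (\<nu> -` {0}))) C"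
  then obtain E where "C = diff_V DA E \<inter> diff_V DA (\<nu> -` {0})"
    unfolding kolchin_subtopology_closed by blast
  then show "closedin (kolchin_topology DB) {q \<in> diff_spec DB. \<nu> -` q \<in> C}"
    unfolding kolchin_closed using contraction_preimage_V by blast
qed

subsection \<open>Fractions with denominators in a multiplicative set\<close>

definition fractions :: "'a set \<Rightarrow> 'b set" where
  "fractions M = {x. \<exists>c\<in>M. \<exists>a. \<nu> c * x = \<nu> a}"

lemma fraction_deriv:
  assumes h: "\<nu> c * x = \<nu> a"
  shows "\<nu> (c * c) * DB i x = \<nu> (c * DA i a - DA i c * a)"
proof -
  have h2: "\<nu> c * DB i x + \<nu> (DA i c) * x = \<nu> (DA i a)"
    using arg_cong[OF h, of "DB i"] by (simp add: deriv_B_mul hom_deriv)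
  have "\<nu> (c * c) * DB i x = \<nu> c * (\<nu> c * DB i x)" by (simp add: hom_mul mult.assoc)
  also have "\<dots> = \<nu> c * (\<nu> (DA i a) - \<nu> (DA i c) * x)"
    using h2 by (metis add_diff_cancel_right')
  also have "\<dots> = \<nu> c * \<nu> (DA i a) - \<nu> (DA i c) * (\<nu> c * x)" by (simp add: algebra_simps)
  also have "\<dots> = \<nu> (c * DA i a - DA i c * a)" using h by (simp add: hom_mul hom_diff)
  finally show ?thesis .
qed

lemma range_in_fractions:
  assumes "1 \<in> M"
  shows "range \<nu> \<subseteq> fractions M"
proof
  fix y assume "y \<in> range \<nu>"
  then obtain a where "y = \<nu> a" by blast
  then have "\<nu> 1 * y = \<nu> a" by (simp add: hom_one)
  then show "y \<in> fractions M" unfolding fractions_def using assms by blast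
qed

text \<open>With denominators from a multiplicative set the fractions form a differential
  subring of B; closure under the derivations is the quotient rule.\<close>
lemma fractions_diff_subring:
  assumes one: "1 \<in> M" and mult: "\<And>c d. c \<in> M \<Longrightarrow> d \<in> M \<Longrightarrow> c * d \<in> M"
  shows "diff_subring DB (fractions M)"
  unfolding diff_subring_def diff_closed_def
proof (intro conjI ballI allI)
  show "1 \<in> fractions M"
    using range_in_fractions[OF one] hom_one by (metis rangeI subsetD)
next
  fix x y assume "x \<in> fractions M" "y \<in> fractions M"
  then obtain c a c' a' where h: "c \<in> M" "\<nu> c * x = \<nu> a" "c' \<in> M" "\<nu> c' * y = \<nu> a'"
    unfolding fractions_def by blast
  have "\<nu> (c * c') * (x + y) = \<nu> c' * (\<nu> c * x) + \<nu> c * (\<nu> c' * y)"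
    by (simp add: hom_mul algebra_simps)
  also have "\<dots> = \<nu> (c' * a + c * a')" using h by (simp add: hom_mul hom_add)
  finally have "\<nu> (c * c') * (x + y) = \<nu> (c' * a + c * a')" .
  then show "x + y \<in> fractions M" unfolding fractions_def using mult h by blast
  have "\<nu> (c * c') * (x * y) = (\<nu> c * x) * (\<nu> c' * y)"
    by (simp add: hom_mul algebra_simps)
  also have "\<dots> = \<nu> (a * a')" using h by (simp add: hom_mul)
  finally have "\<nu> (c * c') * (x * y) = \<nu> (a * a')" .
  then show "x * y \<in> fractions M" unfolding fractions_def using mult h by blast
next
  fix x assume "x \<in> fractions M"
  then obtain c a where h: "c \<in> M" "\<nu> c * x = \<nu> a" unfolding fractions_def by blast
  then have "\<nu> c * (- x) = \<nu> (- a)" by (simp add: hom_neg)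
  then show "- x \<in> fractions M" unfolding fractions_def using h(1) by blast
next
  fix i x assume "x \<in> fractions M"
  then obtain c a where h: "c \<in> M" "\<nu> c * x = \<nu> a" unfolding fractions_def by blast
  then show "DB i x \<in> fractions M"
    unfolding fractions_def using fraction_deriv[OF h(2)] mult[OF h(1) h(1)] by blast
qed

text \<open>For a prime differential ideal p, the fractions with denominators outside p form a
  differential subring containing \<nu>(A); so they exhaust B once they contain a set of
  differential generators.\<close>
lemma fractions_UNIV_if_generators:
  assumes p: "p \<in> diff_spec DA"
    and gen: "diff_subring_gen DB (range \<nu> \<union> G) = UNIV"
    and G: "G \<subseteq> fractions (- p)"
  shows "fractions (- p) = UNIV"
proof -
  have P: "is_prime_ideal p" using p diff_spec_prime by blast
  have sub: "diff_subring DB (fractions (- p))"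
    using prime_ideal_one[OF P] prime_ideal_nmul[OF P] by (intro fractions_diff_subring) auto
  have "range \<nu> \<subseteq> fractions (- p)"
    using range_in_fractions prime_ideal_one[OF P] by simp
  then have "diff_subring_gen DB (range \<nu> \<union> G) \<subseteq> fractions (- p)"
    unfolding diff_subring_gen_def using sub G by (intro Inter_lower) blast
  then show ?thesis using gen by blast
qed

text \<open>A generator with "denominators" b_1,...,b_n satisfying {b_1,...,b_n} = A is a
  p-fraction for every p, because some b_k lies outside p.\<close>
lemma generator_in_fractions:
  assumes p: "p \<in> diff_spec DA"
    and den: "\<forall>k<n. \<nu> (b k) * y \<in> range \<nu>"
    and unit: "rad_diff_ideal_gen DA (b ` {..<n}) = UNIV"
  shows "y \<in> fractions (- p)"
proof -
  obtain k where "k < n" "b k \<notin> p"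
    using diff_spec_not_contains_unit_generators[OF p unit] by blast
  moreover obtain a where "\<nu> (b k) * y = \<nu> a" using den \<open>k < n\<close> by blast
  ultimately show ?thesis unfolding fractions_def by blast
qed

subsection \<open>Extension of a prime ideal\<close>

definition extension :: "'a set \<Rightarrow> 'b set" where
  "extension p = {x. \<exists>c a. c \<notin> p \<and> a \<in> p \<and> \<nu> c * x = \<nu> a}"

lemma kernel_saturated:
  assumes "is_ideal I" "\<nu> -` {0} \<subseteq> I" "\<nu> y = \<nu> a" "a \<in> I"
  shows "y \<in> I"
proof -
  have "\<nu> (y - a) = 0" using assms(3) by (simp add: hom_diff)
  then have "y - a \<in> I" using assms(2) by blast
  then have "y - a + a \<in> I" using ideal_add[OF assms(1) _ assms(4)] by blast
  then show ?thesis by simp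
qed

lemma contraction_extension:
  assumes P: "is_prime_ideal p" and ker: "\<nu> -` {0} \<subseteq> p"
  shows "\<nu> -` extension p = p"
proof safe
  fix x assume "\<nu> x \<in> extension p"
  then obtain c a where h: "c \<notin> p" "a \<in> p" "\<nu> c * \<nu> x = \<nu> a"
    unfolding extension_def by blast
  then have "\<nu> (c * x) = \<nu> a" by (simp add: hom_mul)
  then have "c * x \<in> p" using kernel_saturated prime_ideal_is_ideal[OF P] ker h(2) by blast
  then show "x \<in> p" using prime_ideal_mul[OF P] h(1) by blast
next
  fix x assume "x \<in> p"
  moreover have "\<nu> 1 * \<nu> x = \<nu> x" by (simp add: hom_one)
  ultimately have "\<nu> x \<in> extension p"
    unfolding extension_def using prime_ideal_one[OF P] by blast
  then show "x \<in> \<nu> -` extension p" by simp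
qed

lemma extension_contraction:
  assumes q: "is_prime_ideal q" and frac: "fractions (- (\<nu> -` q)) = UNIV"
  shows "extension (\<nu> -` q) = q"
proof safe
  fix x assume "x \<in> extension (\<nu> -` q)"
  then obtain c a where "\<nu> c \<notin> q" "\<nu> a \<in> q" "\<nu> c * x = \<nu> a"
    unfolding extension_def by auto
  then show "x \<in> q" using prime_ideal_mul[OF q, of "\<nu> c" x] by simp
next
  fix x assume "x \<in> q"
  obtain c a where h: "c \<notin> \<nu> -` q" "\<nu> c * x = \<nu> a"
    using frac unfolding fractions_def by blast
  have "\<nu> c * x \<in> q" using ideal_lmul[OF prime_ideal_is_ideal[OF q] \<open>x \<in> q\<close>] .
  then have "\<nu> a \<in> q" using h(2) by simp
  with h show "x \<in> extension (\<nu> -` q)" unfolding extension_def by blast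
qed

lemma extension_ideal:
  assumes P: "is_prime_ideal p" and frac: "fractions (- p) = UNIV"
  shows "is_ideal (extension p)"
proof -
  have I: "is_ideal p" using P prime_ideal_is_ideal by blast
  show ?thesis
    unfolding is_ideal_def
  proof (intro conjI ballI allI)
    have "\<nu> 1 * 0 = \<nu> 0" by (simp add: hom_zero)
    then show "0 \<in> extension p"
      unfolding extension_def using ideal_zero[OF I] prime_ideal_one[OF P] by blast
  next
    fix x assume "x \<in> extension p"
    then obtain c a where h: "c \<notin> p" "a \<in> p" "\<nu> c * x = \<nu> a" unfolding extension_def by blast
    then have "\<nu> c * (- x) = \<nu> (- a)" by (simp add: hom_neg)
    then show "- x \<in> extension p"
      unfolding extension_def using h ideal_neg[OF I] by blast
  next
    fix r x assume "x \<in> extension p"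
    then obtain c a where h: "c \<notin> p" "a \<in> p" "\<nu> c * x = \<nu> a" unfolding extension_def by blast
    obtain d e where h2: "d \<notin> p" "\<nu> d * r = \<nu> e" using frac unfolding fractions_def by blast
    have "\<nu> (d * c) * (r * x) = (\<nu> d * r) * (\<nu> c * x)" by (simp add: hom_mul algebra_simps)
    also have "\<dots> = \<nu> (e * a)" using h h2 by (simp add: hom_mul)
    finally have "\<nu> (d * c) * (r * x) = \<nu> (e * a)" .
    then show "r * x \<in> extension p"
      unfolding extension_def using h h2 prime_ideal_nmul[OF P] ideal_lmul[OF I] by blast
  next
    fix x y assume "x \<in> extension p" "y \<in> extension p"
    then obtain c a c' a' where h: "c \<notin> p" "a \<in> p" "\<nu> c * x = \<nu> a"
        "c' \<notin> p" "a' \<in> p" "\<nu> c' * y = \<nu> a'"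
      unfolding extension_def by blast
    have "\<nu> (c * c') * (x + y) = \<nu> c' * (\<nu> c * x) + \<nu> c * (\<nu> c' * y)"
      by (simp add: hom_mul algebra_simps)
    also have "\<dots> = \<nu> (c' * a + c * a')" using h by (simp add: hom_mul hom_add)
    finally have "\<nu> (c * c') * (x + y) = \<nu> (c' * a + c * a')" .
    moreover have "c' * a + c * a' \<in> p"
      using ideal_add[OF I ideal_lmul[OF I h(2)] ideal_lmul[OF I h(5)]] .
    ultimately show "x + y \<in> extension p"
      unfolding extension_def using h prime_ideal_nmul[OF P] by blast
  qed
qed

text \<open>... and it is prime: if xy = a/c with a \<in> p, write x = e/d, y = e'/d'; then
  c e e' \<equiv> d d' a modulo ker \<nu> \<subseteq> p, so e or e' lies in p.\<close>
lemma extension_prime: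
  assumes P: "is_prime_ideal p" and ker: "\<nu> -` {0} \<subseteq> p" and frac: "fractions (- p) = UNIV"
  shows "is_prime_ideal (extension p)"
  unfolding is_prime_ideal_def
proof (intro conjI allI impI)
  have I: "is_ideal p" using P prime_ideal_is_ideal by blast
  show "is_ideal (extension p)" using extension_ideal[OF P frac] .
  have "\<nu> 1 \<notin> extension p"
    using contraction_extension[OF P ker] prime_ideal_one[OF P] by blast
  then show "extension p \<noteq> UNIV" by blast
  fix x y assume "x * y \<in> extension p"
  then obtain c a where h: "c \<notin> p" "a \<in> p" "\<nu> c * (x * y) = \<nu> a"
    unfolding extension_def by blast
  obtain d e where h1: "d \<notin> p" "\<nu> d * x = \<nu> e" using frac unfolding fractions_def by blast
  obtain d' e' where h2: "d' \<notin> p" "\<nu> d' * y = \<nu> e'" using frac unfolding fractions_def by blast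
  have "\<nu> (c * (e * e')) = \<nu> c * ((\<nu> d * x) * (\<nu> d' * y))"
    using h1 h2 by (simp add: hom_mul)
  also have "\<dots> = \<nu> (d * d') * (\<nu> c * (x * y))" by (simp add: hom_mul algebra_simps)
  also have "\<dots> = \<nu> (d * d' * a)" using h by (simp add: hom_mul)
  finally have "\<nu> (c * (e * e')) = \<nu> (d * d' * a)" .
  then have "c * (e * e') \<in> p"
    using kernel_saturated[OF I ker] ideal_lmul[OF I h(2)] by blast
  then have "e \<in> p \<or> e' \<in> p" using prime_ideal_mul[OF P] h(1) by blast
  then show "x \<in> extension p \<or> y \<in> extension p"
    unfolding extension_def using h1 h2 by blast
qed

text \<open>By the quotient rule the extension of a differential ideal is differential.\<close>
lemma extension_diff_closed:
  assumes P: "is_prime_ideal p" and D: "diff_closed DA p"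
  shows "diff_closed DB (extension p)"
  unfolding diff_closed_def
proof (intro allI ballI)
  fix i x assume "x \<in> extension p"
  then obtain c a where h: "c \<notin> p" "a \<in> p" "\<nu> c * x = \<nu> a" unfolding extension_def by blast
  have I: "is_ideal p" using P prime_ideal_is_ideal by blast
  have "DA i a \<in> p" using h(2) D by (simp add: diff_closed_def)
  then have "c * DA i a - DA i c * a \<in> p"
    using ideal_diff[OF I ideal_lmul[OF I] ideal_lmul[OF I h(2)]] by blast
  then show "DB i x \<in> extension p"
    unfolding extension_def using fraction_deriv[OF h(3)] prime_ideal_nmul[OF P h(1) h(1)] by blast
qed

lemma extension_in_diff_spec:
  assumes p: "p \<in> diff_V DA (\<nu> -` {0})" and frac: "fractions (- p) = UNIV"
  shows "extension p \<in> diff_spec DB"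
proof -
  have P: "is_prime_ideal p" and D: "diff_closed DA p" and ker: "\<nu> -` {0} \<subseteq> p"
    using p by (auto simp: diff_V_def diff_spec_def)
  show ?thesis
    unfolding diff_spec_def using extension_prime[OF P ker frac] extension_diff_closed[OF P D] by blast
qed

context
  assumes all_fractions: "\<And>p. p \<in> diff_spec DA \<Longrightarrow> fractions (- p) = UNIV"
begin

lemma extension_maps_to_spec:
  assumes pV: "p \<in> diff_V DA (\<nu> -` {0})"
  shows "extension p \<in> diff_spec DB"
proof -
  have "p \<in> diff_spec DA" using pV by (simp add: diff_V_def)
  then show ?thesis using extension_in_diff_spec[OF pV all_fractions] by blast
qed

lemma extension_preimage_V:
  fixes E :: "'b set"
  defines "E' \<equiv> {a. \<exists>c x. x \<in> E \<and> \<nu> c * x = \<nu> a}"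
  shows "{p \<in> diff_V DA (\<nu> -` {0}). extension p \<in> diff_V DB E}
         = diff_V DA E' \<inter> diff_V DA (\<nu> -` {0})"
proof (intro set_eqI iffI)
  fix p assume "p \<in> {p \<in> diff_V DA (\<nu> -` {0}). extension p \<in> diff_V DB E}"
  then have pV: "p \<in> diff_V DA (\<nu> -` {0})" and E: "E \<subseteq> extension p"
    by (simp_all add: diff_V_def)
  then have p: "p \<in> diff_spec DA" and ker: "\<nu> -` {0} \<subseteq> p"
    by (simp_all add: diff_V_def)
  have P: "is_prime_ideal p" using p diff_spec_prime by blast
  have Iext: "is_ideal (extension p)"
    using extension_ideal[OF P all_fractions[OF p]] .
  have "E' \<subseteq> p"
  proof
    fix a assume "a \<in> E'"
    then obtain c x where "x \<in> E" and cx: "\<nu> c * x = \<nu> a" unfolding E'_def by blast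
    then have "\<nu> c * x \<in> extension p" using E ideal_lmul[OF Iext] by blast
    then have "\<nu> a \<in> extension p" using cx by simp
    then show "a \<in> p" using contraction_extension[OF P ker] by blast
  qed
  then show "p \<in> diff_V DA E' \<inter> diff_V DA (\<nu> -` {0})" using pV p by (simp add: diff_V_def)
next
  fix p assume p: "p \<in> diff_V DA E' \<inter> diff_V DA (\<nu> -` {0})"
  then have pV: "p \<in> diff_V DA (\<nu> -` {0})" and E'p: "E' \<subseteq> p" by (simp_all add: diff_V_def)
  have ps: "p \<in> diff_spec DA" using pV by (simp add: diff_V_def)
  have "E \<subseteq> extension p"
  proof
    fix x assume "x \<in> E"
    obtain c a where c: "c \<notin> p" and ca: "\<nu> c * x = \<nu> a"
      using all_fractions[OF ps] unfolding fractions_def by blast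
    have "a \<in> E'" unfolding E'_def using \<open>x \<in> E\<close> ca by blast
    then have "a \<in> p" using E'p by blast
    then show "x \<in> extension p" unfolding extension_def using c ca by blast
  qed
  then show "p \<in> {p \<in> diff_V DA (\<nu> -` {0}). extension p \<in> diff_V DB E}"
    using pV extension_maps_to_spec[OF pV] by (simp add: diff_V_def)
qed

lemma extension_continuous:
  "continuous_map (subtopology (kolchin_topology DA) (diff_V DA (\<nu> -` {0})))
     (kolchin_topology DB) extension"
  unfolding continuous_map_closedin topspace_diff_V kolchin_topspace
proof (intro conjI allI impI)
  show "extension \<in> diff_V DA (\<nu> -` {0}) \<rightarrow> diff_spec DB"
    using extension_maps_to_spec by blast
next
  fix C assume "closedin (kolchin_topology DB) C"
  then obtain E where C: "C = diff_V DB E" unfolding kolchin_closed by blast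
  show "closedin (subtopology (kolchin_topology DA) (diff_V DA (\<nu> -` {0})))
      {p \<in> diff_V DA (\<nu> -` {0}). extension p \<in> C}"
    unfolding kolchin_subtopology_closed C extension_preimage_V by blast
qed

text \<open>Extension is inverse to contraction on both sides.\<close>
theorem contraction_homeomorphic:
  "homeomorphic_map (kolchin_topology DB)
     (subtopology (kolchin_topology DA) (diff_V DA (\<nu> -` {0}))) (\<lambda>q. \<nu> -` q)"
  unfolding homeomorphic_map_maps
proof (intro exI)
  have "extension (\<nu> -` q) = q" if q: "q \<in> diff_spec DB" for q
  proof (rule extension_contraction)
    show "is_prime_ideal q" using q diff_spec_prime by blast
    have "\<nu> -` q \<in> diff_spec DA" using contraction_in_V_kernel[OF q] by (simp add: diff_V_def)
    then show "fractions (- (\<nu> -` q)) = UNIV" by (rule all_fractions)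
  qed
  moreover have "\<nu> -` extension p = p" if pV: "p \<in> diff_V DA (\<nu> -` {0})" for p
  proof (rule contraction_extension)
    have "p \<in> diff_spec DA" using pV by (simp add: diff_V_def)
    then show "is_prime_ideal p" by (rule diff_spec_prime)
    show "\<nu> -` {0} \<subseteq> p" using pV by (simp add: diff_V_def)
  qed
  ultimately show "homeomorphic_maps (kolchin_topology DB)
     (subtopology (kolchin_topology DA) (diff_V DA (\<nu> -` {0}))) (\<lambda>q. \<nu> -` q) extension"
    unfolding homeomorphic_maps_def topspace_diff_V kolchin_topspace
    using contraction_continuous extension_continuous by blast
qed

end

end

theorem lemma2p3:
  fixes DA :: "'i::finite \<Rightarrow> 'a::comm_ring_1 \<Rightarrow> 'a"
    and DB :: "'i \<Rightarrow> 'b::comm_ring_1 \<Rightarrow> 'b"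
    and \<nu> :: "'a \<Rightarrow> 'b"
    and \<eta> :: "nat \<Rightarrow> 'b"
    and m :: nat
  assumes "diff_ring DA" and "diff_ring DB"
    and "diff_hom DA DB \<nu>"
    and "diff_subring_gen DB (range \<nu> \<union> \<eta> ` {..<m}) = UNIV"
    and "\<forall>j<m. \<exists>n. \<exists>b :: nat \<Rightarrow> 'a.
           (\<forall>k<n. \<nu> (b k) * \<eta> j \<in> range \<nu>) \<and> rad_diff_ideal_gen DA (b ` {..<n}) = UNIV"
  shows "homeomorphic_map (kolchin_topology DB)
           (subtopology (kolchin_topology DA) (diff_V DA (\<nu> -` {0}))) (\<lambda>q. \<nu> -` q)"
proof -
  interpret diff_ring_hom DA DB \<nu>
    using assms(2,3) by unfold_locales (simp_all add: diff_ring_def)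
  have "fractions (- p) = UNIV" if p: "p \<in> diff_spec DA" for p
  proof (rule fractions_UNIV_if_generators[OF p assms(4)])
    show "\<eta> ` {..<m} \<subseteq> fractions (- p)"
    proof
      fix y assume "y \<in> \<eta> ` {..<m}"
      then obtain j where "j < m" and y: "y = \<eta> j" by blast
      then obtain n and b :: "nat \<Rightarrow> 'a" where "\<forall>k<n. \<nu> (b k) * \<eta> j \<in> range \<nu>"
          and "rad_diff_ideal_gen DA (b ` {..<n}) = UNIV"
        using assms(5) by blast
      then show "y \<in> fractions (- p)" unfolding y by (rule generator_in_fractions[OF p])
    qed
  qed
  then show ?thesis by (rule contraction_homeomorphic)
qed

end
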